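(* The abelian Lie superalgebra $A(m\mid n)$ is capable if and only if either $m=0,n=1$ or $m+n\ge 2$.
   Context: All algebras are over a field $\mathbb{F}$ of characteristic $\neq 2,3$. $A(m\mid n)$ denotes the abelian Lie superalgebra with even part of dimension $m$ and odd part of dimension $n$. A Lie superalgebra $L$ is capable if $L\cong H/Z(H)$ for some Lie superalgebra $H$, where $Z(H)$ is the center of $H$. *)

theory Defs
  imports Main
begin

record ('v, 'f) lsa =
  scar  :: "'v set"
  szero :: "'v"
  sadd  :: "'v \<Rightarrow> 'v \<Rightarrow> 'v"
  ssmul :: "'f \<Rightarrow> 'v \<Rightarrow> 'v"
  sbr   :: "'v \<Rightarrow> 'v \<Rightarrow> 'v"
  sev   :: "'v set"
  sod   :: "'v set"

definition vspace :: "('v, 'f::field) lsa \<Rightarrow> bool" where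
  "vspace L \<longleftrightarrow>
     szero L \<in> scar L \<and>
     (\<forall>x\<in>scar L. \<forall>y\<in>scar L. sadd L x y \<in> scar L) \<and>
     (\<forall>c. \<forall>x\<in>scar L. ssmul L c x \<in> scar L) \<and>
     (\<forall>x\<in>scar L. \<forall>y\<in>scar L. \<forall>z\<in>scar L. sadd L (sadd L x y) z = sadd L x (sadd L y z)) \<and>
     (\<forall>x\<in>scar L. \<forall>y\<in>scar L. sadd L x y = sadd L y x) \<and>
     (\<forall>x\<in>scar L. sadd L (szero L) x = x) \<and>
     (\<forall>x\<in>scar L. \<exists>y\<in>scar L. sadd L x y = szero L) \<and>
     (\<forall>c. \<forall>x\<in>scar L. \<forall>y\<in>scar L. ssmul L c (sadd L x y) = sadd L (ssmul L c x) (ssmul L c y)) \<and>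
     (\<forall>a b. \<forall>x\<in>scar L. ssmul L (a + b) x = sadd L (ssmul L a x) (ssmul L b x)) \<and>
     (\<forall>a b. \<forall>x\<in>scar L. ssmul L a (ssmul L b x) = ssmul L (a * b) x) \<and>
     (\<forall>x\<in>scar L. ssmul L 1 x = x)"

definition subspace_of :: "'v set \<Rightarrow> ('v, 'f::field) lsa \<Rightarrow> bool" where
  "subspace_of S L \<longleftrightarrow> S \<subseteq> scar L \<and> szero L \<in> S \<and>
     (\<forall>x\<in>S. \<forall>y\<in>S. sadd L x y \<in> S) \<and> (\<forall>c. \<forall>x\<in>S. ssmul L c x \<in> S)"

definition homog :: "('v, 'f) lsa \<Rightarrow> nat \<Rightarrow> 'v set" where
  "homog L d = (if d = 0 then sev L else sod L)"

definition ssign :: "nat \<Rightarrow> nat \<Rightarrow> 'f::field" where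
  "ssign d e = (-1) ^ (d * e)"

definition lie_superalgebra :: "('v, 'f::field) lsa \<Rightarrow> bool" where
  "lie_superalgebra L \<longleftrightarrow>
     vspace L \<and>
     subspace_of (sev L) L \<and> subspace_of (sod L) L \<and>
     sev L \<inter> sod L = {szero L} \<and>
     (\<forall>x\<in>scar L. \<exists>a\<in>sev L. \<exists>b\<in>sod L. x = sadd L a b) \<and>
     (\<forall>x\<in>scar L. \<forall>y\<in>scar L. sbr L x y \<in> scar L) \<and>
     (\<forall>x\<in>scar L. \<forall>y\<in>scar L. \<forall>z\<in>scar L. sbr L (sadd L x y) z = sadd L (sbr L x z) (sbr L y z)) \<and>
     (\<forall>x\<in>scar L. \<forall>y\<in>scar L. \<forall>z\<in>scar L. sbr L x (sadd L y z) = sadd L (sbr L x y) (sbr L x z)) \<and>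
     (\<forall>c. \<forall>x\<in>scar L. \<forall>y\<in>scar L. sbr L (ssmul L c x) y = ssmul L c (sbr L x y)) \<and>
     (\<forall>c. \<forall>x\<in>scar L. \<forall>y\<in>scar L. sbr L x (ssmul L c y) = ssmul L c (sbr L x y)) \<and>
     (\<forall>d\<in>{0,1}. \<forall>e\<in>{0,1}. \<forall>x\<in>homog L d. \<forall>y\<in>homog L e.
        sbr L x y \<in> homog L ((d + e) mod 2)) \<and>
     (\<forall>d\<in>{0,1}. \<forall>e\<in>{0,1}. \<forall>x\<in>homog L d. \<forall>y\<in>homog L e.
        sbr L x y = ssmul L (- ssign d e) (sbr L y x)) \<and>
     (\<forall>d\<in>{0,1}. \<forall>e\<in>{0,1}. \<forall>f\<in>{0,1}.
        \<forall>x\<in>homog L d. \<forall>y\<in>homog L e. \<forall>z\<in>homog L f.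
        sadd L (sadd L (ssmul L (ssign d f) (sbr L x (sbr L y z)))
                       (ssmul L (ssign e d) (sbr L y (sbr L z x))))
               (ssmul L (ssign f e) (sbr L z (sbr L x y))) = szero L)"

definition center :: "('v, 'f) lsa \<Rightarrow> 'v set" where
  "center L = {z \<in> scar L. \<forall>x\<in>scar L. sbr L z x = szero L}"

definition coset :: "('v, 'f) lsa \<Rightarrow> 'v set \<Rightarrow> 'v \<Rightarrow> 'v set" where
  "coset L I x = {sadd L x z | z. z \<in> I}"

definition quot :: "('v, 'f) lsa \<Rightarrow> 'v set \<Rightarrow> ('v set, 'f) lsa" where
  "quot L I = \<lparr> scar = coset L I ` scar L,
                szero = coset L I (szero L),
                sadd = (\<lambda>A B. {sadd L a b | a b. a \<in> A \<and> b \<in> B}),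
                ssmul = (\<lambda>c A. {sadd L (ssmul L c a) z | a z. a \<in> A \<and> z \<in> I}),
                sbr = (\<lambda>A B. {sadd L (sbr L a b) z | a b z. a \<in> A \<and> b \<in> B \<and> z \<in> I}),
                sev = coset L I ` sev L,
                sod = coset L I ` sod L \<rparr>"

definition lsa_iso :: "('v, 'f) lsa \<Rightarrow> ('w, 'f) lsa \<Rightarrow> bool" where
  "lsa_iso L M \<longleftrightarrow> (\<exists>\<phi>. bij_betw \<phi> (scar L) (scar M) \<and>
     (\<forall>x\<in>scar L. \<forall>y\<in>scar L. \<phi> (sadd L x y) = sadd M (\<phi> x) (\<phi> y)) \<and>
     (\<forall>c. \<forall>x\<in>scar L. \<phi> (ssmul L c x) = ssmul M c (\<phi> x)) \<and>
     (\<forall>x\<in>scar L. \<forall>y\<in>scar L. \<phi> (sbr L x y) = sbr M (\<phi> x) (\<phi> y)) \<and>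
     \<phi> ` sev L = sev M \<and> \<phi> ` sod L = sod M)"

definition capable_in :: "'h itself \<Rightarrow> ('v, 'f::field) lsa \<Rightarrow> bool" where
  "capable_in (_ :: 'h itself) L \<longleftrightarrow>
     (\<exists>H :: ('h, 'f) lsa. lie_superalgebra H \<and> lsa_iso L (quot H (center H)))"

text \<open>The abelian Lie superalgebra A(m|n), realised as F^(m+n) (vectors
nat => F supported on {0..<m+n}); coordinates < m even, the others odd.\<close>
definition abelian_lsa :: "nat \<Rightarrow> nat \<Rightarrow> (nat \<Rightarrow> 'f::field, 'f) lsa" where
  "abelian_lsa m n = \<lparr> scar = {v. \<forall>i\<ge>m + n. v i = 0},
                       szero = (\<lambda>_. 0),
                       sadd = (\<lambda>v w i. v i + w i),
                       ssmul = (\<lambda>c v i. c * v i),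
                       sbr = (\<lambda>_ _ _. 0),
                       sev = {v. \<forall>i\<ge>m. v i = 0},
                       sod = {v. (\<forall>i\<ge>m + n. v i = 0) \<and> (\<forall>i<m. v i = 0)} \<rparr>"

end

theory Submission
  imports Defs
begin

text \<open>If \<open>H/Z(H) \<cong> A(1|0)\<close>, then \<open>H\<close> is spanned modulo its center by one even element \<open>g\<close>;
  since \<open>[g, g] = -[g, g]\<close> and \<open>2 \<noteq> 0\<close>, \<open>g\<close> commutes with \<open>F g + Z(H) = H\<close>, so \<open>H\<close> is
  abelian and \<open>H/Z(H)\<close> is trivial. Conversely, with \<open>V = A(m|n)\<close> let \<open>H = V \<oplus> (V \<otimes> V)\<close> with
  \<open>[v, w] = v \<otimes> w - (-1)\<^bsup>|v||w|\<^esup> w \<otimes> v\<close> for \<open>v, w \<in> V\<close> and \<open>V \<otimes> V\<close> central.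
  Then \<open>H/(V \<otimes> V) \<cong> A(m|n)\<close>, and \<open>V \<otimes> V\<close> is the whole center unless \<open>(m, n) = (1, 0)\<close>:
  an odd basis vector \<open>e\<^sub>i\<close> has \<open>[e\<^sub>i, e\<^sub>i] = 2 e\<^sub>i \<otimes> e\<^sub>i \<noteq> 0\<close>, and an even one has
  \<open>[e\<^sub>i, e\<^sub>j] \<noteq> 0\<close> for any \<open>j \<noteq> i\<close>.\<close>

lemma vspaceD:
  assumes "vspace L"
  shows vspace_zero_closed: "szero L \<in> scar L"
    and vspace_add_closed: "\<And>x y. x \<in> scar L \<Longrightarrow> y \<in> scar L \<Longrightarrow> sadd L x y \<in> scar L"
    and vspace_smul_closed: "\<And>c x. x \<in> scar L \<Longrightarrow> ssmul L c x \<in> scar L"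
    and vspace_add_assoc: "\<And>x y z. x \<in> scar L \<Longrightarrow> y \<in> scar L \<Longrightarrow> z \<in> scar L \<Longrightarrow>
          sadd L (sadd L x y) z = sadd L x (sadd L y z)"
    and vspace_add_commute: "\<And>x y. x \<in> scar L \<Longrightarrow> y \<in> scar L \<Longrightarrow> sadd L x y = sadd L y x"
    and vspace_zero_add: "\<And>x. x \<in> scar L \<Longrightarrow> sadd L (szero L) x = x"
    and vspace_neg_exists: "\<And>x. x \<in> scar L \<Longrightarrow> \<exists>y\<in>scar L. sadd L x y = szero L"
    and vspace_smul_add: "\<And>c x y. x \<in> scar L \<Longrightarrow> y \<in> scar L \<Longrightarrow>
          ssmul L c (sadd L x y) = sadd L (ssmul L c x) (ssmul L c y)"
    and vspace_add_smul: "\<And>a b x. x \<in> scar L \<Longrightarrow> ssmul L (a + b) x = sadd L (ssmul L a x) (ssmul L b x)"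
    and vspace_smul_smul: "\<And>a b x. x \<in> scar L \<Longrightarrow> ssmul L a (ssmul L b x) = ssmul L (a * b) x"
    and vspace_one_smul: "\<And>x. x \<in> scar L \<Longrightarrow> ssmul L 1 x = x"
  by (meson assms[unfolded vspace_def])+

lemma vspace_add_right_eq_self:
  assumes V: "vspace L" and x: "x \<in> scar L" and y: "y \<in> scar L" and eq: "sadd L x y = x"
  shows "y = szero L"
proof -
  obtain x' where x': "x' \<in> scar L" "sadd L x x' = szero L"
    using vspace_neg_exists[OF V x] by blast
  have "y = sadd L (sadd L x' x) y"
    using V x x' y by (simp add: vspace_add_commute vspace_zero_add)
  also have "\<dots> = sadd L x' x"
    using V x x' y eq by (simp add: vspace_add_assoc)
  also have "\<dots> = szero L"
    using V x x' by (simp add: vspace_add_commute)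
  finally show ?thesis .
qed

lemma vspace_smul_zero:
  assumes V: "vspace L"
  shows "ssmul L c (szero L) = szero L"
proof -
  note z = vspace_zero_closed[OF V]
  have "ssmul L c (szero L) = sadd L (ssmul L c (szero L)) (ssmul L c (szero L))"
    using vspace_smul_add[OF V z z] vspace_zero_add[OF V z] by simp
  then show ?thesis
    by (metis V z vspace_add_right_eq_self vspace_smul_closed)
qed

lemma vspace_zero_smul:
  assumes V: "vspace L" and x: "x \<in> scar L"
  shows "ssmul L 0 x = szero L"
proof -
  have "ssmul L 0 x = sadd L (ssmul L 0 x) (ssmul L 0 x)"
    using vspace_add_smul[OF V x, of 0 0] by simp
  then show ?thesis
    by (metis V x vspace_add_right_eq_self vspace_smul_closed)
qed

lemma vspace_add_neg:
  assumes V: "vspace L" and x: "x \<in> scar L"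
  shows "sadd L x (ssmul L (-1) x) = szero L"
proof -
  have "sadd L x (ssmul L (-1) x) = ssmul L (1 + -1) x"
    using vspace_add_smul[OF V x, of 1 "-1"] vspace_one_smul[OF V x] by simp
  also have "\<dots> = szero L"
    using vspace_zero_smul[OF V x] by simp
  finally show ?thesis .
qed

lemma vspace_eq_neg_self_imp_zero:
  fixes L :: "('v, 'f::field) lsa"
  assumes V: "vspace L" and x: "x \<in> scar L" and two: "(2::'f) \<noteq> 0"
    and eq: "x = ssmul L (-1) x"
  shows "x = szero L"
proof -
  have "ssmul L 2 x = sadd L x x"
    using vspace_add_smul[OF V x, of 1 1] vspace_one_smul[OF V x] by (simp add: one_add_one)
  also have "\<dots> = szero L"
    using vspace_add_neg[OF V x] eq by simp
  finally have "ssmul L (inverse 2) (ssmul L 2 x) = szero L"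
    using vspace_smul_zero[OF V] by simp
  then show ?thesis
    using vspace_smul_smul[OF V x] vspace_one_smul[OF V x] two by simp
qed

lemma coset_self:
  assumes V: "vspace L" and "szero L \<in> I" and h: "h \<in> scar L"
  shows "h \<in> coset L I h"
proof -
  have "sadd L h (szero L) \<in> coset L I h"
    unfolding coset_def using assms(2) by blast
  moreover have "sadd L h (szero L) = h"
    using vspace_add_commute[OF V h vspace_zero_closed[OF V]] vspace_zero_add[OF V h] by simp
  ultimately show ?thesis
    by simp
qed

lemma coset_carrier:
  assumes V: "vspace L" and h: "h \<in> scar L"
  shows "coset L (scar L) h = scar L"
proof
  show "coset L (scar L) h \<subseteq> scar L"
    unfolding coset_def using vspace_add_closed[OF V h] by blast
  show "scar L \<subseteq> coset L (scar L) h"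
  proof
    fix y assume y: "y \<in> scar L"
    have neg_h: "ssmul L (-1) h \<in> scar L"
      using V h by (rule vspace_smul_closed)
    have "sadd L h (sadd L (ssmul L (-1) h) y) \<in> coset L (scar L) h"
      unfolding coset_def using vspace_add_closed[OF V neg_h y] by blast
    moreover have "sadd L h (sadd L (ssmul L (-1) h) y) = sadd L (sadd L h (ssmul L (-1) h)) y"
      using vspace_add_assoc[OF V h neg_h y] by simp
    moreover have "\<dots> = y"
      using vspace_add_neg[OF V h] vspace_zero_add[OF V y] by simp
    ultimately show "y \<in> coset L (scar L) h"
      by simp
  qed
qed

lemma quot_by_carrier:
  assumes "vspace L"
  shows "scar (quot L (scar L)) = {scar L}"
proof -
  have "scar (quot L (scar L)) = (\<lambda>_. scar L) ` scar L"
    unfolding quot_def using coset_carrier[OF assms] by (simp cong: image_cong)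
  then show ?thesis
    using vspace_zero_closed[OF assms] by blast
qed

lemma lsa_isoE:
  assumes "lsa_iso L M"
  obtains \<phi> where "bij_betw \<phi> (scar L) (scar M)"
    and "\<And>c x. x \<in> scar L \<Longrightarrow> \<phi> (ssmul L c x) = ssmul M c (\<phi> x)"
    and "\<phi> ` sev L = sev M"
  using assms unfolding lsa_iso_def by (elim exE conjE) (rule that; simp)

lemma lie_superalgebraD:
  assumes "lie_superalgebra L"
  shows lsa_vspace: "vspace L"
    and lsa_even_subspace: "subspace_of (sev L) L"
    and lsa_odd_subspace: "subspace_of (sod L) L"
    and lsa_even_odd_decomp: "\<And>x. x \<in> scar L \<Longrightarrow> \<exists>a\<in>sev L. \<exists>b\<in>sod L. x = sadd L a b"
    and lsa_br_closed: "\<And>x y. x \<in> scar L \<Longrightarrow> y \<in> scar L \<Longrightarrow> sbr L x y \<in> scar L"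
    and lsa_br_add_left: "\<And>x y z. x \<in> scar L \<Longrightarrow> y \<in> scar L \<Longrightarrow> z \<in> scar L \<Longrightarrow>
          sbr L (sadd L x y) z = sadd L (sbr L x z) (sbr L y z)"
    and lsa_br_add_right: "\<And>x y z. x \<in> scar L \<Longrightarrow> y \<in> scar L \<Longrightarrow> z \<in> scar L \<Longrightarrow>
          sbr L x (sadd L y z) = sadd L (sbr L x y) (sbr L x z)"
    and lsa_br_smul_left: "\<And>c x y. x \<in> scar L \<Longrightarrow> y \<in> scar L \<Longrightarrow>
          sbr L (ssmul L c x) y = ssmul L c (sbr L x y)"
    and lsa_br_supersymmetric: "\<And>d e x y. d \<in> {0,1} \<Longrightarrow> e \<in> {0,1} \<Longrightarrow>
          x \<in> homog L d \<Longrightarrow> y \<in> homog L e \<Longrightarrow> sbr L x y = ssmul L (- ssign d e) (sbr L y x)"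
  by (meson assms[unfolded lie_superalgebra_def])+

lemma lsa_even_in_carrier: "lie_superalgebra L \<Longrightarrow> x \<in> sev L \<Longrightarrow> x \<in> scar L"
  using lsa_even_subspace unfolding subspace_of_def by blast

lemma lsa_odd_in_carrier: "lie_superalgebra L \<Longrightarrow> x \<in> sod L \<Longrightarrow> x \<in> scar L"
  using lsa_odd_subspace unfolding subspace_of_def by blast

lemma center_subset_carrier: "center L \<subseteq> scar L"
  unfolding center_def by blast

lemma zero_in_center:
  assumes L: "lie_superalgebra L"
  shows "szero L \<in> center L"
proof -
  note V = lsa_vspace[OF L]
  note z = vspace_zero_closed[OF V]
  have "sbr L (szero L) x = szero L" if x: "x \<in> scar L" for x
  proof -
    have "sbr L (szero L) x = sbr L (ssmul L 0 (szero L)) x"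
      using vspace_zero_smul[OF V z] by simp
    also have "\<dots> = ssmul L 0 (sbr L (szero L) x)"
      using L z x by (rule lsa_br_smul_left)
    also have "\<dots> = szero L"
      using V lsa_br_closed[OF L z x] by (rule vspace_zero_smul)
    finally show ?thesis .
  qed
  then show ?thesis
    unfolding center_def using z by blast
qed

lemma lsa_br_even_self:
  fixes L :: "('v, 'f::field) lsa"
  assumes L: "lie_superalgebra L" and two: "(2::'f) \<noteq> 0" and g: "g \<in> sev L"
  shows "sbr L g g = szero L"
proof -
  have "sbr L g g = ssmul L (- ssign 0 0) (sbr L g g)"
    using L g by (intro lsa_br_supersymmetric) (auto simp: homog_def)
  then have "sbr L g g = ssmul L (-1) (sbr L g g)"
    by (simp add: ssign_def)
  then show ?thesis
    using lsa_vspace[OF L] lsa_br_closed[OF L] lsa_even_in_carrier[OF L g] two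
    by (blast intro: vspace_eq_neg_self_imp_zero)
qed

text \<open>The shape \<open>c (g + z\<^sub>1) + z\<^sub>2\<close> is how scalar multiples of the coset \<open>g + Z(H)\<close>
  are computed in \<open>quot\<close>.\<close>

definition spanned_mod_center :: "('v, 'f) lsa \<Rightarrow> 'v \<Rightarrow> bool" where
  "spanned_mod_center H g \<longleftrightarrow> (\<forall>h\<in>scar H.
     \<exists>c z1 z2. z1 \<in> center H \<and> z2 \<in> center H \<and> h = sadd H (ssmul H c (sadd H g z1)) z2)"

lemma center_eq_carrier_if_even_span:
  fixes H :: "('v, 'f::field) lsa"
  assumes H: "lie_superalgebra H" and two: "(2::'f) \<noteq> 0" and g: "g \<in> sev H"
    and span: "spanned_mod_center H g"
  shows "center H = scar H"
proof -
  note V = lsa_vspace[OF H]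
  have gH: "g \<in> scar H"
    using H g by (rule lsa_even_in_carrier)
  have central: "z \<in> center H \<Longrightarrow> y \<in> scar H \<Longrightarrow> sbr H z y = szero H" for z y
    unfolding center_def by blast
  have left: "sbr H h y = szero H"
    if h: "h \<in> scar H" and y: "y \<in> scar H" and gy: "sbr H g y = szero H" for h y
  proof -
    obtain c z1 z2 where z: "z1 \<in> center H" "z2 \<in> center H"
      and hz: "h = sadd H (ssmul H c (sadd H g z1)) z2"
      using span h unfolding spanned_mod_center_def by blast
    have z1: "z1 \<in> scar H" and z2: "z2 \<in> scar H"
      using z center_subset_carrier[of H] by auto
    have "sbr H h y = sadd H (ssmul H c (sadd H (sbr H g y) (sbr H z1 y))) (sbr H z2 y)"
      unfolding hz using H V gH z1 z2 y
      by (simp add: lsa_br_add_left lsa_br_smul_left vspace_add_closed vspace_smul_closed)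
    also have "\<dots> = szero H"
      using gy central[OF z(1) y] central[OF z(2) y] V
      by (simp add: vspace_zero_add vspace_zero_closed vspace_smul_zero)
    finally show ?thesis .
  qed
  have yg: "sbr H y g = szero H" if "y \<in> scar H" for y
    using left[OF that gH lsa_br_even_self[OF H two g]] .
  have gy: "sbr H g y = szero H" if y: "y \<in> scar H" for y
  proof -
    obtain a b where ab: "a \<in> sev H" "b \<in> sod H" "y = sadd H a b"
      using lsa_even_odd_decomp[OF H y] by blast
    have aH: "a \<in> scar H" and bH: "b \<in> scar H"
      using lsa_even_in_carrier[OF H ab(1)] lsa_odd_in_carrier[OF H ab(2)] .
    have "sbr H g a = ssmul H (- ssign 0 0) (sbr H a g)"
      using H g ab by (intro lsa_br_supersymmetric) (auto simp: homog_def)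
    then have ga: "sbr H g a = szero H"
      using yg[OF aH] vspace_smul_zero[OF V] by simp
    have "sbr H g b = ssmul H (- ssign 0 1) (sbr H b g)"
      using H g ab by (intro lsa_br_supersymmetric) (auto simp: homog_def)
    then have gb: "sbr H g b = szero H"
      using yg[OF bH] vspace_smul_zero[OF V] by simp
    show ?thesis
      using lsa_br_add_right[OF H gH aH bH] ab(3) ga gb V
      by (simp add: vspace_zero_add vspace_zero_closed)
  qed
  show ?thesis
    using left[OF _ _ gy] center_subset_carrier unfolding center_def by blast
qed

lemma quot_center_iso_abelian_1_0_even_span:
  fixes H :: "('h, 'f::field) lsa"
  assumes H: "lie_superalgebra H"
    and iso: "lsa_iso (abelian_lsa 1 0 :: (nat \<Rightarrow> 'f, 'f) lsa) (quot H (center H))"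
  obtains g where "g \<in> sev H" and "spanned_mod_center H g"
proof -
  define A where "A = (abelian_lsa 1 0 :: (nat \<Rightarrow> 'f, 'f) lsa)"
  define Q where "Q = quot H (center H)"
  obtain \<phi> where bij: "bij_betw \<phi> (scar A) (scar Q)"
    and smul: "\<And>c x. x \<in> scar A \<Longrightarrow> \<phi> (ssmul A c x) = ssmul Q c (\<phi> x)"
    and even: "\<phi> ` sev A = sev Q"
    using iso unfolding A_def Q_def by (elim lsa_isoE) blast
  define e where "e = (\<lambda>i::nat. if i = 0 then (1::'f) else 0)"
  have e: "e \<in> scar A" "e \<in> sev A"
    unfolding A_def abelian_lsa_def e_def by auto
  have "\<phi> e \<in> sev Q"
    using even e(2) by blast
  then obtain g where g: "g \<in> sev H" and \<phi>e: "\<phi> e = coset H (center H) g"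
    unfolding Q_def quot_def by auto
  have span: "\<exists>c z1 z2. z1 \<in> center H \<and> z2 \<in> center H \<and> h = sadd H (ssmul H c (sadd H g z1)) z2"
    if h: "h \<in> scar H" for h
  proof -
    have "coset H (center H) h \<in> scar Q"
      unfolding Q_def quot_def using h by simp
    then obtain a where a: "a \<in> scar A" "coset H (center H) h = \<phi> a"
      using bij unfolding bij_betw_def by auto
    have "a = ssmul A (a 0) e"
      using a(1) unfolding A_def abelian_lsa_def e_def by (auto simp: fun_eq_iff)
    then have "\<phi> a = ssmul Q (a 0) (\<phi> e)"
      using smul[OF e(1)] by metis
    then have coset_h: "coset H (center H) h =
        {sadd H (ssmul H (a 0) x) z | x z. x \<in> coset H (center H) g \<and> z \<in> center H}"
      using a(2) \<phi>e unfolding Q_def quot_def by simp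
    have "h \<in> coset H (center H) h"
      using lsa_vspace[OF H] zero_in_center[OF H] h by (rule coset_self)
    then obtain x z where "x \<in> coset H (center H) g" "z \<in> center H"
      and "h = sadd H (ssmul H (a 0) x) z"
      unfolding coset_h by blast
    then show ?thesis
      unfolding coset_def by blast
  qed
  have "spanned_mod_center H g"
    unfolding spanned_mod_center_def using span by blast
  with g show ?thesis
    by (rule that)
qed

lemma abelian_lsa_1_0_not_capable:
  assumes two: "(2::'f::field) \<noteq> 0"
  shows "\<not> capable_in TYPE('h) (abelian_lsa 1 0 :: (nat \<Rightarrow> 'f, 'f) lsa)"
proof
  define A where "A = (abelian_lsa 1 0 :: (nat \<Rightarrow> 'f, 'f) lsa)"
  define e where "e = (\<lambda>i::nat. if i = 0 then (1::'f) else 0)"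
  assume "capable_in TYPE('h) (abelian_lsa 1 0 :: (nat \<Rightarrow> 'f, 'f) lsa)"
  then obtain H :: "('h, 'f) lsa" where H: "lie_superalgebra H"
    and iso: "lsa_iso (abelian_lsa 1 0 :: (nat \<Rightarrow> 'f, 'f) lsa) (quot H (center H))"
    unfolding capable_in_def by blast
  obtain g where "g \<in> sev H" and "spanned_mod_center H g"
    using H iso by (rule quot_center_iso_abelian_1_0_even_span)
  then have "center H = scar H"
    using H two by (intro center_eq_carrier_if_even_span)
  then have carrier: "scar (quot H (center H)) = {scar H}"
    using quot_by_carrier[OF lsa_vspace[OF H]] by simp
  obtain \<phi> where bij: "bij_betw \<phi> (scar A) (scar (quot H (center H)))"
    using iso unfolding A_def by (elim lsa_isoE) blast
  have e: "e \<in> scar A" and zero: "(\<lambda>_. 0) \<in> scar A"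
    unfolding A_def e_def abelian_lsa_def by auto
  have "\<phi> e = \<phi> (\<lambda>_. 0)"
    using bij_betw_apply[OF bij e] bij_betw_apply[OF bij zero] unfolding carrier by simp
  with bij_betw_imp_inj_on[OF bij] have "e = (\<lambda>_. 0)"
    using e zero by (rule inj_onD)
  then have "e 0 = 0"
    by simp
  then show False
    unfolding e_def by simp
qed

text \<open>The cover \<open>H = V \<oplus> (V \<otimes> V)\<close> for \<open>V = F\<^bsup>k\<^esup>\<close>, \<open>k = m + n\<close>, realised on coordinates
  \<open>0 ..< k + k\<^sup>2\<close>: coordinate \<open>k + i k + j\<close> (\<open>i, j < k\<close>) is the \<open>(i, j)\<close> entry of the tensor
  part, whose parity \<open>cover_odd\<close> is \<open>|e\<^sub>i| + |e\<^sub>j|\<close>, and \<open>cover_sign m i j\<close> is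
  \<open>(-1)\<^bsup>|e\<^sub>i||e\<^sub>j|\<^esup>\<close>.\<close>

abbreviation cover_dim :: "nat \<Rightarrow> nat" where
  "cover_dim k \<equiv> k + k * k"

definition cover_odd :: "nat \<Rightarrow> nat \<Rightarrow> nat \<Rightarrow> bool" where
  "cover_odd m n t =
    (if t < m + n then m \<le> t
     else if t < cover_dim (m + n)
       then (m \<le> (t - (m + n)) div (m + n)) \<noteq> (m \<le> (t - (m + n)) mod (m + n))
     else False)"

definition cover_sign :: "nat \<Rightarrow> nat \<Rightarrow> nat \<Rightarrow> 'f::field" where
  "cover_sign m i j = (if m \<le> i \<and> m \<le> j then -1 else 1)"

definition cover_br :: "nat \<Rightarrow> nat \<Rightarrow> (nat \<Rightarrow> 'f::field) \<Rightarrow> (nat \<Rightarrow> 'f) \<Rightarrow> nat \<Rightarrow> 'f" where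
  "cover_br m n v w t =
    (if m + n \<le> t \<and> t < cover_dim (m + n) then
       v ((t - (m + n)) div (m + n)) * w ((t - (m + n)) mod (m + n))
       - cover_sign m ((t - (m + n)) div (m + n)) ((t - (m + n)) mod (m + n))
           * v ((t - (m + n)) mod (m + n)) * w ((t - (m + n)) div (m + n))
     else 0)"

definition cover_lsa :: "nat \<Rightarrow> nat \<Rightarrow> (nat \<Rightarrow> 'f::field, 'f) lsa" where
  "cover_lsa m n =
    \<lparr> scar = {v. \<forall>t\<ge>cover_dim (m + n). v t = 0},
      szero = (\<lambda>_. 0),
      sadd = (\<lambda>v w i. v i + w i),
      ssmul = (\<lambda>c v i. c * v i),
      sbr = cover_br m n,
      sev = {v. (\<forall>t\<ge>cover_dim (m + n). v t = 0) \<and> (\<forall>t. cover_odd m n t \<longrightarrow> v t = 0)},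
      sod = {v. (\<forall>t\<ge>cover_dim (m + n). v t = 0) \<and> (\<forall>t. \<not> cover_odd m n t \<longrightarrow> v t = 0)} \<rparr>"

definition cover_tensor_part :: "nat \<Rightarrow> nat \<Rightarrow> (nat \<Rightarrow> 'f::field) set" where
  "cover_tensor_part m n = {v. (\<forall>t\<ge>cover_dim (m + n). v t = 0) \<and> (\<forall>i<m + n. v i = 0)}"

lemma pair_coords_less:
  fixes k t :: nat
  assumes "k \<le> t" "t < cover_dim k"
  shows "(t - k) div k < k" and "(t - k) mod k < k"
proof -
  have "k > 0"
    using assms by (cases k) auto
  moreover have "t - k < k * k"
    using assms by simp
  ultimately show "(t - k) div k < k" and "(t - k) mod k < k"
    by (simp_all add: div_less_iff_less_mult)
qed

lemma cover_br_low: "i < m + n \<Longrightarrow> cover_br m n v w i = 0"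
  unfolding cover_br_def by simp

lemma cover_br_at_pair:
  assumes i: "i < m + n" and j: "j < m + n"
  shows "cover_br m n v w (m + n + i * (m + n) + j) = v i * w j - cover_sign m i j * v j * w i"
proof -
  let ?k = "m + n"
  have "i * ?k + j < Suc i * ?k"
    using j by simp
  also have "\<dots> \<le> ?k * ?k"
    using i by (metis Suc_leI mult_le_mono1)
  finally have bound: "?k + i * ?k + j < cover_dim ?k"
    by simp
  have "?k \<noteq> 0"
    using i by linarith
  then have "(j + i * ?k) div ?k = i" "(j + i * ?k) mod ?k = j"
    using j by simp_all
  with bound show ?thesis
    unfolding cover_br_def by (simp add: add.commute)
qed

lemma cover_br_tensor_right:
  assumes "\<forall>i<m + n. w i = 0"
  shows "cover_br m n v w = (\<lambda>_. 0)"
proof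
  fix t
  show "cover_br m n v w t = 0"
  proof (cases "m + n \<le> t \<and> t < cover_dim (m + n)")
    case True
    then show ?thesis
      using pair_coords_less[of "m + n" t] assms by (simp add: cover_br_def)
  qed (auto simp: cover_br_def)
qed

lemma cover_br_tensor_left:
  assumes "\<forall>i<m + n. v i = 0"
  shows "cover_br m n v w = (\<lambda>_. 0)"
proof
  fix t
  show "cover_br m n v w t = 0"
  proof (cases "m + n \<le> t \<and> t < cover_dim (m + n)")
    case True
    then show ?thesis
      using pair_coords_less[of "m + n" t] assms by (simp add: cover_br_def)
  qed (auto simp: cover_br_def)
qed

lemma cover_br_br: "cover_br m n x (cover_br m n y z) = (\<lambda>_. 0)"
  by (simp add: cover_br_low cover_br_tensor_right)

lemma cover_odd_pair:
  assumes "m + n \<le> t" "t < cover_dim (m + n)"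
  shows "cover_odd m n t =
    (cover_odd m n ((t - (m + n)) div (m + n)) \<noteq> cover_odd m n ((t - (m + n)) mod (m + n)))"
  using pair_coords_less[OF assms] assms unfolding cover_odd_def by auto

lemma homog_cover_lsa_vanish:
  assumes "d \<in> {0, 1}" and "x \<in> homog (cover_lsa m n) d" and "cover_odd m n t \<noteq> (d = 1)"
  shows "x t = 0"
  using assms unfolding homog_def cover_lsa_def by (auto split: if_splits)

lemma diff_eq_neg_sign_diff:
  fixes a b s \<sigma> :: "'f::field"
  assumes "a = 0 \<or> s = \<sigma>" "b = 0 \<or> s = \<sigma>" "\<sigma> * \<sigma> = 1"
  shows "a - s * b = - \<sigma> * (b - s * a)"
  using assms by (auto simp: algebra_simps)

lemma cover_br_homog:
  fixes x y :: "nat \<Rightarrow> 'f::field"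
  assumes d: "d \<in> {0, 1}" and e: "e \<in> {0, 1}"
    and x: "x \<in> homog (cover_lsa m n) d" and y: "y \<in> homog (cover_lsa m n) e"
  shows "cover_br m n x y \<in> homog (cover_lsa m n) ((d + e) mod 2)"
proof -
  note hx = homog_cover_lsa_vanish[OF d x] and hy = homog_cover_lsa_vanish[OF e y]
  have vanish: "cover_br m n x y t = 0" if t: "cover_odd m n t \<noteq> ((d + e) mod 2 = 1)" for t
  proof (cases "m + n \<le> t \<and> t < cover_dim (m + n)")
    case True
    define i where "i = (t - (m + n)) div (m + n)"
    define j where "j = (t - (m + n)) mod (m + n)"
    have odd_t: "cover_odd m n t = (cover_odd m n i \<noteq> cover_odd m n j)"
      using cover_odd_pair[of m n t] True unfolding i_def j_def by simp
    have xy: "x i * y j = 0"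
    proof (rule ccontr)
      assume "x i * y j \<noteq> 0"
      then have "cover_odd m n i = (d = 1)" "cover_odd m n j = (e = 1)"
        using hx hy by auto
      then show False
        using t odd_t d e by auto
    qed
    have yx: "x j * y i = 0"
    proof (rule ccontr)
      assume "x j * y i \<noteq> 0"
      then have "cover_odd m n j = (d = 1)" "cover_odd m n i = (e = 1)"
        using hx hy by auto
      then show False
        using t odd_t d e by auto
    qed
    have "cover_br m n x y t = x i * y j - cover_sign m i j * (x j * y i)"
      unfolding cover_br_def using True i_def j_def by (simp add: mult.assoc)
    then show ?thesis
      unfolding xy yx by simp
  qed (auto simp: cover_br_def)
  have "cover_br m n x y \<in> scar (cover_lsa m n)"
    by (simp add: cover_lsa_def cover_br_def)
  then show ?thesis
    using vanish d e unfolding homog_def cover_lsa_def by (auto split: if_splits)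
qed

lemma cover_br_supersymmetric:
  fixes x y :: "nat \<Rightarrow> 'f::field"
  assumes d: "d \<in> {0, 1}" and e: "e \<in> {0, 1}"
    and x: "x \<in> homog (cover_lsa m n) d" and y: "y \<in> homog (cover_lsa m n) e"
  shows "cover_br m n x y = (\<lambda>t. - ssign d e * cover_br m n y x t)"
proof
  fix t
  note hx = homog_cover_lsa_vanish[OF d x] and hy = homog_cover_lsa_vanish[OF e y]
  define \<sigma> where "\<sigma> = (ssign d e :: 'f)"
  have \<sigma>: "\<sigma> = (if d = 1 \<and> e = 1 then -1 else 1)"
    using d e unfolding \<sigma>_def ssign_def by auto
  show "cover_br m n x y t = - ssign d e * cover_br m n y x t"
  proof (cases "m + n \<le> t \<and> t < cover_dim (m + n)")
    case True
    define i where "i = (t - (m + n)) div (m + n)"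
    define j where "j = (t - (m + n)) mod (m + n)"
    have odd_ij: "cover_odd m n i = (m \<le> i)" "cover_odd m n j = (m \<le> j)"
      using pair_coords_less[of "m + n" t] True unfolding i_def j_def cover_odd_def by auto
    have "x i * y j = 0 \<or> cover_sign m i j = \<sigma>"
    proof (cases "x i * y j = 0")
      case False
      then have "cover_odd m n i = (d = 1)" "cover_odd m n j = (e = 1)"
        using hx hy by auto
      then show ?thesis
        using odd_ij \<sigma> unfolding cover_sign_def by auto
    qed simp
    moreover have "x j * y i = 0 \<or> cover_sign m i j = \<sigma>"
    proof (cases "x j * y i = 0")
      case False
      then have "cover_odd m n j = (d = 1)" "cover_odd m n i = (e = 1)"
        using hx hy by auto
      then show ?thesis
        using odd_ij \<sigma> unfolding cover_sign_def by auto
    qed simp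
    moreover have "\<sigma> * \<sigma> = 1"
      using \<sigma> by simp
    ultimately have "x i * y j - cover_sign m i j * (x j * y i)
        = - \<sigma> * (x j * y i - cover_sign m i j * (x i * y j))"
      by (rule diff_eq_neg_sign_diff)
    then show ?thesis
      unfolding cover_br_def \<sigma>_def using True i_def j_def by (simp add: algebra_simps)
  qed (auto simp: cover_br_def)
qed

lemma cover_lsa_lie_superalgebra: "lie_superalgebra (cover_lsa m n :: (nat \<Rightarrow> 'f::field, 'f) lsa)"
proof -
  let ?H = "cover_lsa m n :: (nat \<Rightarrow> 'f, 'f) lsa"
  have ops: "sadd ?H = (\<lambda>v w i. v i + w i)" "ssmul ?H = (\<lambda>c v i. c * v i)"
    "sbr ?H = cover_br m n" "szero ?H = (\<lambda>_. 0)"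
    by (simp_all add: cover_lsa_def)
  have neg: "\<exists>y\<in>scar ?H. sadd ?H x y = szero ?H" if "x \<in> scar ?H" for x
    by (rule bexI[of _ "\<lambda>i. - x i"]) (use that in \<open>auto simp: cover_lsa_def\<close>)
  have V: "vspace ?H"
    unfolding vspace_def using neg by (auto simp: algebra_simps fun_eq_iff cover_lsa_def)
  have decomp: "\<forall>x\<in>scar ?H. \<exists>a\<in>sev ?H. \<exists>b\<in>sod ?H. x = sadd ?H a b"
  proof
    fix x assume x: "x \<in> scar ?H"
    let ?a = "\<lambda>t. if cover_odd m n t then 0 else x t"
    let ?b = "\<lambda>t. if cover_odd m n t then x t else 0"
    have "?a \<in> sev ?H" "?b \<in> sod ?H" "x = sadd ?H ?a ?b"
      using x unfolding cover_lsa_def by (auto simp: fun_eq_iff)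
    then show "\<exists>a\<in>sev ?H. \<exists>b\<in>sod ?H. x = sadd ?H a b"
      by blast
  qed
  have disjoint: "sev ?H \<inter> sod ?H = {szero ?H}"
    unfolding cover_lsa_def by (auto simp: fun_eq_iff) metis
  have subspaces: "subspace_of (sev ?H) ?H" "subspace_of (sod ?H) ?H"
    unfolding subspace_of_def cover_lsa_def by auto
  have closed: "\<forall>x\<in>scar ?H. \<forall>y\<in>scar ?H. sbr ?H x y \<in> scar ?H"
    unfolding cover_lsa_def cover_br_def by auto
  have bilinear:
    "\<forall>x\<in>scar ?H. \<forall>y\<in>scar ?H. \<forall>z\<in>scar ?H. sbr ?H (sadd ?H x y) z = sadd ?H (sbr ?H x z) (sbr ?H y z)"
    "\<forall>x\<in>scar ?H. \<forall>y\<in>scar ?H. \<forall>z\<in>scar ?H. sbr ?H x (sadd ?H y z) = sadd ?H (sbr ?H x y) (sbr ?H x z)"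
    "\<forall>c. \<forall>x\<in>scar ?H. \<forall>y\<in>scar ?H. sbr ?H (ssmul ?H c x) y = ssmul ?H c (sbr ?H x y)"
    "\<forall>c. \<forall>x\<in>scar ?H. \<forall>y\<in>scar ?H. sbr ?H x (ssmul ?H c y) = ssmul ?H c (sbr ?H x y)"
    unfolding ops cover_br_def by (auto simp: fun_eq_iff algebra_simps)
  have graded: "\<forall>d\<in>{0,1}. \<forall>e\<in>{0,1}. \<forall>x\<in>homog ?H d. \<forall>y\<in>homog ?H e.
      sbr ?H x y \<in> homog ?H ((d + e) mod 2)"
    unfolding ops by (intro ballI cover_br_homog)
  have supersymmetric: "\<forall>d\<in>{0,1}. \<forall>e\<in>{0,1}. \<forall>x\<in>homog ?H d. \<forall>y\<in>homog ?H e.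
      sbr ?H x y = ssmul ?H (- ssign d e) (sbr ?H y x)"
    unfolding ops by (intro ballI cover_br_supersymmetric)
  have jacobi: "\<forall>d\<in>{0,1}. \<forall>e\<in>{0,1}. \<forall>f\<in>{0,1}.
      \<forall>x\<in>homog ?H d. \<forall>y\<in>homog ?H e. \<forall>z\<in>homog ?H f.
        sadd ?H (sadd ?H (ssmul ?H (ssign d f) (sbr ?H x (sbr ?H y z)))
                         (ssmul ?H (ssign e d) (sbr ?H y (sbr ?H z x))))
                (ssmul ?H (ssign f e) (sbr ?H z (sbr ?H x y))) = szero ?H"
    unfolding ops by (simp add: cover_br_br)
  show ?thesis
    unfolding lie_superalgebra_def
    using V subspaces disjoint decomp closed bilinear graded supersymmetric jacobi by blast
qed

lemma center_cover_lsa: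
  assumes two: "(2::'f::field) \<noteq> 0" and mn: "(m = 0 \<and> n = 1) \<or> m + n \<ge> 2"
  shows "center (cover_lsa m n :: (nat \<Rightarrow> 'f, 'f) lsa) = cover_tensor_part m n"
proof
  show "cover_tensor_part m n \<subseteq> center (cover_lsa m n :: (nat \<Rightarrow> 'f, 'f) lsa)"
    unfolding center_def cover_lsa_def cover_tensor_part_def using cover_br_tensor_left by auto
  show "center (cover_lsa m n :: (nat \<Rightarrow> 'f, 'f) lsa) \<subseteq> cover_tensor_part m n"
  proof
    fix v :: "nat \<Rightarrow> 'f"
    assume v: "v \<in> center (cover_lsa m n)"
    have high: "\<forall>t\<ge>cover_dim (m + n). v t = 0"
      using v unfolding center_def cover_lsa_def by auto
    have central: "cover_br m n v x = (\<lambda>_. 0)" if "\<forall>t\<ge>cover_dim (m + n). x t = 0" for x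
      using v that unfolding center_def cover_lsa_def by auto
    have "v i = 0" if i: "i < m + n" for i
    proof (rule ccontr)
      assume vi: "v i \<noteq> 0"
      text \<open>For odd \<open>i\<close> take \<open>j = i\<close>; for even \<open>i\<close> any other index, which exists
        since \<open>(m, n) \<noteq> (1, 0)\<close>.\<close>
      define j where "j = (if m \<le> i then i else if i = 0 then 1 else 0)"
      have j: "j < m + n"
        using i mn unfolding j_def by auto
      define x where "x = (\<lambda>t. if t = j then (1::'f) else 0)"
      have "\<forall>t\<ge>cover_dim (m + n). x t = 0"
        using j unfolding x_def by auto
      then have "cover_br m n v x (m + n + i * (m + n) + j) = 0"
        using central by simp
      moreover have "cover_br m n v x (m + n + i * (m + n) + j)
          = v i * x j - cover_sign m i j * v j * x i"
        by (rule cover_br_at_pair[OF i j])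
      moreover have "v i * x j - cover_sign m i j * v j * x i \<noteq> 0"
      proof (cases "m \<le> i")
        case True
        then have "v i * x j - cover_sign m i j * v j * x i = 2 * v i"
          unfolding x_def j_def cover_sign_def by simp
        then show ?thesis
          using two vi by simp
      next
        case False
        then have "j \<noteq> i"
          unfolding j_def by auto
        then show ?thesis
          using vi unfolding x_def by simp
      qed
      ultimately show False
        by simp
    qed
    with high show "v \<in> cover_tensor_part m n"
      unfolding cover_tensor_part_def by auto
  qed
qed

lemma coset_cover_lsa:
  "coset (cover_lsa m n) Z v = {(\<lambda>i. v i + z i) | z. z \<in> Z}"
  unfolding coset_def cover_lsa_def by simp

lemma coset_cover_self: "v \<in> coset (cover_lsa m n) (cover_tensor_part m n) v"
  unfolding coset_cover_lsa cover_tensor_part_def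
  by (intro CollectI exI[of _ "\<lambda>_. 0"] conjI) simp_all

lemma coset_cover_eq_iff:
  assumes u: "u \<in> scar (cover_lsa m n)" and v: "v \<in> scar (cover_lsa m n)"
  shows "coset (cover_lsa m n) (cover_tensor_part m n) u = coset (cover_lsa m n) (cover_tensor_part m n) v
    \<longleftrightarrow> (\<forall>i<m + n. u i = v i)"
    (is "?C u = ?C v \<longleftrightarrow> _")
proof
  have "u \<in> ?C u"
    by (rule coset_cover_self)
  moreover assume "?C u = ?C v"
  ultimately obtain z where "z \<in> cover_tensor_part m n" "u = (\<lambda>i. v i + z i)"
    unfolding coset_cover_lsa by auto
  then show "\<forall>i<m + n. u i = v i"
    unfolding cover_tensor_part_def by auto
next
  have shift: "?C x \<subseteq> ?C y"
    if "x \<in> scar (cover_lsa m n)" "y \<in> scar (cover_lsa m n)" "\<forall>i<m + n. x i = y i" for x y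
  proof
    fix a assume "a \<in> ?C x"
    then obtain z where z: "z \<in> cover_tensor_part m n" "a = (\<lambda>i. x i + z i)"
      unfolding coset_cover_lsa by auto
    define d where "d = (\<lambda>i. x i - y i + z i)"
    have "d \<in> cover_tensor_part m n"
      using z(1) that unfolding d_def cover_tensor_part_def cover_lsa_def by auto
    moreover have "a = (\<lambda>i. y i + d i)"
      unfolding z(2) d_def by simp
    ultimately show "a \<in> ?C y"
      unfolding coset_cover_lsa by blast
  qed
  assume "\<forall>i<m + n. u i = v i"
  then show "?C u = ?C v"
    using shift[OF u v] shift[OF v u] by auto
qed

lemma quot_cover_add:
  fixes m n :: nat and x y :: "nat \<Rightarrow> 'f::field"
  defines "C \<equiv> coset (cover_lsa m n :: (nat \<Rightarrow> 'f, 'f) lsa) (cover_tensor_part m n)"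
  shows "sadd (quot (cover_lsa m n) (cover_tensor_part m n)) (C x) (C y) = C (\<lambda>i. x i + y i)"
proof -
  let ?Z = "cover_tensor_part m n :: (nat \<Rightarrow> 'f) set"
  have C: "C v = {(\<lambda>i. v i + z i) | z. z \<in> ?Z}" for v
    unfolding C_def by (rule coset_cover_lsa)
  have "{(\<lambda>i. a i + b i) | a b. a \<in> C x \<and> b \<in> C y} = C (\<lambda>i. x i + y i)"
  proof (intro equalityI subsetI)
    fix w assume "w \<in> {(\<lambda>i. a i + b i) | a b. a \<in> C x \<and> b \<in> C y}"
    then obtain z1 z2 where z: "z1 \<in> ?Z" "z2 \<in> ?Z" "w = (\<lambda>i. (x i + z1 i) + (y i + z2 i))"
      unfolding C by auto
    define z where "z = (\<lambda>i. z1 i + z2 i)"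
    have "z \<in> ?Z"
      using z unfolding z_def cover_tensor_part_def by auto
    moreover have "w = (\<lambda>i. (x i + y i) + z i)"
      unfolding z(3) z_def by (simp add: algebra_simps)
    ultimately show "w \<in> C (\<lambda>i. x i + y i)"
      unfolding C by blast
  next
    fix w assume "w \<in> C (\<lambda>i. x i + y i)"
    then obtain z where z: "z \<in> ?Z" "w = (\<lambda>i. (x i + y i) + z i)"
      unfolding C by auto
    define a where "a = (\<lambda>i. x i + z i)"
    have "a \<in> C x"
      unfolding C a_def using z(1) by blast
    moreover have "y \<in> C y"
      unfolding C_def by (rule coset_cover_self)
    moreover have "w = (\<lambda>i. a i + y i)"
      unfolding z(2) a_def by (simp add: algebra_simps)
    ultimately show "w \<in> {(\<lambda>i. a i + b i) | a b. a \<in> C x \<and> b \<in> C y}"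
      by blast
  qed
  then show ?thesis
    unfolding quot_def cover_lsa_def by simp
qed

lemma quot_cover_smul:
  fixes m n :: nat and x :: "nat \<Rightarrow> 'f::field"
  defines "C \<equiv> coset (cover_lsa m n :: (nat \<Rightarrow> 'f, 'f) lsa) (cover_tensor_part m n)"
  shows "ssmul (quot (cover_lsa m n) (cover_tensor_part m n)) c (C x) = C (\<lambda>i. c * x i)"
proof -
  let ?Z = "cover_tensor_part m n :: (nat \<Rightarrow> 'f) set"
  have C: "C v = {(\<lambda>i. v i + z i) | z. z \<in> ?Z}" for v
    unfolding C_def by (rule coset_cover_lsa)
  have "{(\<lambda>i. c * a i + z i) | a z. a \<in> C x \<and> z \<in> ?Z} = C (\<lambda>i. c * x i)"
  proof (intro equalityI subsetI)
    fix w assume "w \<in> {(\<lambda>i. c * a i + z i) | a z. a \<in> C x \<and> z \<in> ?Z}"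
    then obtain z1 z where z: "z1 \<in> ?Z" "z \<in> ?Z" "w = (\<lambda>i. c * (x i + z1 i) + z i)"
      unfolding C by auto
    define z' where "z' = (\<lambda>i. c * z1 i + z i)"
    have "z' \<in> ?Z"
      using z unfolding z'_def cover_tensor_part_def by auto
    moreover have "w = (\<lambda>i. c * x i + z' i)"
      unfolding z(3) z'_def by (simp add: algebra_simps)
    ultimately show "w \<in> C (\<lambda>i. c * x i)"
      unfolding C by blast
  next
    fix w assume "w \<in> C (\<lambda>i. c * x i)"
    then obtain z where "z \<in> ?Z" "w = (\<lambda>i. c * x i + z i)"
      unfolding C by auto
    moreover have "x \<in> C x"
      unfolding C_def by (rule coset_cover_self)
    ultimately show "w \<in> {(\<lambda>i. c * a i + z i) | a z. a \<in> C x \<and> z \<in> ?Z}"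
      by blast
  qed
  then show ?thesis
    unfolding quot_def cover_lsa_def by simp
qed

lemma quot_cover_br:
  fixes m n :: nat and x y :: "nat \<Rightarrow> 'f::field"
  defines "C \<equiv> coset (cover_lsa m n :: (nat \<Rightarrow> 'f, 'f) lsa) (cover_tensor_part m n)"
  shows "sbr (quot (cover_lsa m n) (cover_tensor_part m n)) (C x) (C y) = C (\<lambda>_. 0)"
proof -
  let ?Z = "cover_tensor_part m n :: (nat \<Rightarrow> 'f) set"
  have C: "C v = {(\<lambda>i. v i + z i) | z. z \<in> ?Z}" for v
    unfolding C_def by (rule coset_cover_lsa)
  have br_Z: "cover_br m n a b \<in> ?Z" for a b
    unfolding cover_tensor_part_def by (auto simp: cover_br_def)
  have "{(\<lambda>i. cover_br m n a b i + z i) | a b z. a \<in> C x \<and> b \<in> C y \<and> z \<in> ?Z} = C (\<lambda>_. 0)"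
  proof (intro equalityI subsetI)
    fix w assume "w \<in> {(\<lambda>i. cover_br m n a b i + z i) | a b z. a \<in> C x \<and> b \<in> C y \<and> z \<in> ?Z}"
    then obtain a b z where "z \<in> ?Z" "w = (\<lambda>i. 0 + (cover_br m n a b i + z i))"
      by auto
    moreover have "(\<lambda>i. cover_br m n a b i + z i) \<in> ?Z" if "z \<in> ?Z" for a b z
      using br_Z[of a b] that unfolding cover_tensor_part_def by auto
    ultimately show "w \<in> C (\<lambda>_. 0)"
      unfolding C by auto
  next
    fix w assume "w \<in> C (\<lambda>_. 0)"
    then obtain z where z: "z \<in> ?Z" "w = (\<lambda>i. 0 + z i)"
      unfolding C by auto
    define z' where "z' = (\<lambda>i. z i - cover_br m n x y i)"
    have "z' \<in> ?Z"
      using z(1) br_Z[of x y] unfolding z'_def cover_tensor_part_def by auto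
    moreover have "w = (\<lambda>i. cover_br m n x y i + z' i)"
      unfolding z(2) z'_def by simp
    moreover have "x \<in> C x" "y \<in> C y"
      unfolding C_def by (rule coset_cover_self)+
    ultimately show "w \<in> {(\<lambda>i. cover_br m n a b i + z i) | a b z. a \<in> C x \<and> b \<in> C y \<and> z \<in> ?Z}"
      by blast
  qed
  then show ?thesis
    unfolding quot_def cover_lsa_def by simp
qed

lemma abelian_lsa_iso_quot_cover:
  "lsa_iso (abelian_lsa m n :: (nat \<Rightarrow> 'f::field, 'f) lsa) (quot (cover_lsa m n) (cover_tensor_part m n))"
proof -
  let ?A = "abelian_lsa m n :: (nat \<Rightarrow> 'f, 'f) lsa"
  let ?H = "cover_lsa m n :: (nat \<Rightarrow> 'f, 'f) lsa"
  let ?Q = "quot ?H (cover_tensor_part m n)"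
  define C where "C = coset ?H (cover_tensor_part m n)"
  define trunc where "trunc h = (\<lambda>i. if i < m + n then h i else 0)" for h :: "nat \<Rightarrow> 'f"
  have A_H: "scar ?A \<subseteq> scar ?H"
    unfolding abelian_lsa_def cover_lsa_def by auto
  have trunc_A: "trunc h \<in> scar ?A" for h
    unfolding trunc_def abelian_lsa_def by simp
  have C_trunc: "C (trunc h) = C h" if "h \<in> scar ?H" for h
    unfolding C_def using that trunc_A A_H by (subst coset_cover_eq_iff) (auto simp: trunc_def)
  have C_image: "C ` S = C ` T" if "S \<subseteq> T" "T \<subseteq> scar ?H" "trunc ` T \<subseteq> S" for S T
  proof
    show "C ` S \<subseteq> C ` T"
      using that(1) by blast
    show "C ` T \<subseteq> C ` S"
    proof
      fix X assume "X \<in> C ` T"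
      then obtain h where "h \<in> T" "X = C h"
        by blast
      then have "X = C (trunc h)" and "trunc h \<in> S"
        using C_trunc that(2,3) by auto
      then show "X \<in> C ` S"
        by blast
    qed
  qed
  have Q: "scar ?Q = C ` scar ?H" "sev ?Q = C ` sev ?H" "sod ?Q = C ` sod ?H"
    by (simp_all add: quot_def C_def)
  have inj: "inj_on C (scar ?A)"
  proof (rule inj_onI)
    fix u v assume u: "u \<in> scar ?A" and v: "v \<in> scar ?A" and "C u = C v"
    then have "\<forall>i<m + n. u i = v i"
      unfolding C_def using A_H by (subst (asm) coset_cover_eq_iff) auto
    with u v show "u = v"
      unfolding abelian_lsa_def by (auto simp: fun_eq_iff) (metis not_less)
  qed
  have onto: "C ` scar ?A = scar ?Q"
    unfolding Q
    by (rule C_image) (use A_H trunc_A in auto)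
  have even: "C ` sev ?A = sev ?Q"
    unfolding Q
    by (rule C_image) (auto simp: abelian_lsa_def cover_lsa_def cover_odd_def trunc_def)
  have odd: "C ` sod ?A = sod ?Q"
    unfolding Q
    by (rule C_image) (auto simp: abelian_lsa_def cover_lsa_def cover_odd_def trunc_def)
  have add: "C (sadd ?A x y) = sadd ?Q (C x) (C y)" for x y
    unfolding C_def quot_cover_add by (simp add: abelian_lsa_def)
  have smul: "C (ssmul ?A c x) = ssmul ?Q c (C x)" for c x
    unfolding C_def quot_cover_smul by (simp add: abelian_lsa_def)
  have br: "C (sbr ?A x y) = sbr ?Q (C x) (C y)" for x y
    unfolding C_def quot_cover_br by (simp add: abelian_lsa_def)
  show ?thesis
    unfolding lsa_iso_def bij_betw_def
    by (intro exI[of _ C] conjI ballI allI inj onto even odd add smul br)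
qed

lemma abelian_lsa_capable:
  assumes "(2::'f::field) \<noteq> 0" and "(m = 0 \<and> n = 1) \<or> m + n \<ge> 2"
  shows "capable_in TYPE(nat \<Rightarrow> 'f) (abelian_lsa m n :: (nat \<Rightarrow> 'f, 'f) lsa)"
  unfolding capable_in_def
  using cover_lsa_lie_superalgebra abelian_lsa_iso_quot_cover center_cover_lsa[OF assms]
  by metis

theorem mainTheorem2:
  fixes m n :: nat
  assumes "(2::'f::field) \<noteq> 0" and "(3::'f) \<noteq> 0"
    and "m + n \<ge> 1"
  shows "(capable_in TYPE('h) (abelian_lsa m n :: (nat \<Rightarrow> 'f, 'f) lsa)
            \<longrightarrow> ((m = 0 \<and> n = 1) \<or> m + n \<ge> 2))
       \<and> (((m = 0 \<and> n = 1) \<or> m + n \<ge> 2)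
            \<longrightarrow> capable_in TYPE(nat \<Rightarrow> 'f) (abelian_lsa m n :: (nat \<Rightarrow> 'f, 'f) lsa))"
proof (intro conjI impI)
  assume capable: "capable_in TYPE('h) (abelian_lsa m n :: (nat \<Rightarrow> 'f, 'f) lsa)"
  show "(m = 0 \<and> n = 1) \<or> m + n \<ge> 2"
  proof (rule ccontr)
    assume "\<not> ((m = 0 \<and> n = 1) \<or> m + n \<ge> 2)"
    then have "m = 1" "n = 0"
      using assms(3) by auto
    then show False
      using capable abelian_lsa_1_0_not_capable[OF assms(1), where 'h = 'h] by simp
  qed
next
  assume "(m = 0 \<and> n = 1) \<or> m + n \<ge> 2"
  then show "capable_in TYPE(nat \<Rightarrow> 'f) (abelian_lsa m n :: (nat \<Rightarrow> 'f, 'f) lsa)"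
    by (rule abelian_lsa_capable[OF assms(1)])
qed

end
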